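(* Let $Q$ be a process on $A^{\mathbb{Z}}$ and $\Theta\subseteq\mathcal{P}_{\mathrm{erg}}(A^{\mathbb{Z}})$ such that $h(P,Q)$ exists for all $P\in\Theta$. The following are equivalent: 1. $\bar\beta_\varepsilon(P,Q)\le -h(P,Q)$ for all $P\in\Theta$ and all $\varepsilon\in(0,1)$. 2. For every $\Omega\subseteq\Theta$ and every $\eta>0$ there are subsets $M_n\subseteq A^n$ with $\lim_{n}P^{(n)}(M_n)=1$ for all $P\in\Omega$ and with $\limsup_n\frac1n\log Q^{(n)}(M_n)\le -h(\Omega,Q)+\eta$ if $h(\Omega,Q)<\infty$, resp. $\limsup_n\frac1n\log Q^{(n)}(M_n)\le -1/\eta$ if $h(\Omega,Q)=\infty$; and moreover every sequence $\tilde M_n\subseteq A^n$ with $\lim_n P^{(n)}(\tilde M_n)=1$ for all $P\in\Omega$ satisfies $\liminf_n\frac1n\log Q^{(n)}(\tilde M_n)\ge -h(\Omega,Q)$.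
   Context: $A$ is a finite set; a process is a probability measure on $A^{\mathbb{Z}}$ with the product $\sigma$-field generated by cylinders. $P^{(n)}$ denotes the marginal of $P$ on coordinates $\{0,\dots,n-1\}$, a probability on $A^n$. $\mathcal{P}_{\mathrm{erg}}(A^{\mathbb{Z}})$ is the set of shift-ergodic processes. $H(\cdot,\cdot)$ is the relative entropy (Kullback–Leibler divergence) of probability measures on a finite set; $h(P,Q):=\lim_n\frac1nH(P^{(n)},Q^{(n)})$ when the limit exists in $[0,+\infty]$, and $h(\Omega,Q):=\inf_{P\in\Omega}h(P,Q)$. For $\varepsilon\in(0,1)$, $\beta_{\varepsilon,n}(P,Q):=\min\{\log Q^{(n)}(M):M\subseteq A^n,\ P^{(n)}(M)\ge1-\varepsilon\}$ and $\bar\beta_\varepsilon(P,Q):=\limsup_n\frac1n\beta_{\varepsilon,n}(P,Q)$. *)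

theory Defs
  imports "HOL-Probability.Probability"
begin

definition process :: "(int \<Rightarrow> 'a::finite) measure \<Rightarrow> bool" where
  "process P \<longleftrightarrow> prob_space P \<and>
     sets P = sets (PiM (UNIV::int set) (\<lambda>_. count_space (UNIV::'a set)))"

definition shift :: "(int \<Rightarrow> 'a) \<Rightarrow> (int \<Rightarrow> 'a)" where
  "shift x = (\<lambda>i. x (i + 1))"

definition ergodic_process :: "(int \<Rightarrow> 'a::finite) measure \<Rightarrow> bool" where
  "ergodic_process P \<longleftrightarrow> process P \<and> shift \<in> measurable P P \<and> distr P P shift = P \<and>
     (\<forall>S\<in>sets P. shift -` S \<inter> space P = S \<longrightarrow> measure P S = 0 \<or> measure P S = 1)"

definition words :: "nat \<Rightarrow> 'a list set" where
  "words n = {w. length w = n}"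

definition marg :: "(int \<Rightarrow> 'a) measure \<Rightarrow> nat \<Rightarrow> 'a list set \<Rightarrow> real" where
  "marg P n M = measure P {x \<in> space P. map (\<lambda>i. x (int i)) [0..<n] \<in> M}"

definition eln :: "real \<Rightarrow> ereal" where
  "eln x = (if x = 0 then -\<infinity> else ereal (ln x))"

definition kl_term :: "real \<Rightarrow> real \<Rightarrow> ereal" where
  "kl_term p q = (if p = 0 then 0 else if q = 0 then \<infinity> else ereal (p * ln (p / q)))"

definition relent :: "(int \<Rightarrow> 'a) measure \<Rightarrow> (int \<Rightarrow> 'a) measure \<Rightarrow> nat \<Rightarrow> ereal" where
  "relent P Q n = (\<Sum>w\<in>words n. kl_term (marg P n {w}) (marg Q n {w}))"

definition relent_rate_seq :: "(int \<Rightarrow> 'a) measure \<Rightarrow> (int \<Rightarrow> 'a) measure \<Rightarrow> nat \<Rightarrow> ereal" where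
  "relent_rate_seq P Q n = ereal (1 / real n) * relent P Q n"

definition rate_exists :: "(int \<Rightarrow> 'a) measure \<Rightarrow> (int \<Rightarrow> 'a) measure \<Rightarrow> bool" where
  "rate_exists P Q \<longleftrightarrow> (\<exists>L. relent_rate_seq P Q \<longlonglongrightarrow> L)"

definition hrate :: "(int \<Rightarrow> 'a) measure \<Rightarrow> (int \<Rightarrow> 'a) measure \<Rightarrow> ereal" where
  "hrate P Q = lim (relent_rate_seq P Q)"

definition hrate_set :: "(int \<Rightarrow> 'a) measure set \<Rightarrow> (int \<Rightarrow> 'a) measure \<Rightarrow> ereal" where
  "hrate_set \<Omega> Q = (INF P\<in>\<Omega>. hrate P Q)"

definition beta :: "real \<Rightarrow> nat \<Rightarrow> (int \<Rightarrow> 'a) measure \<Rightarrow> (int \<Rightarrow> 'a) measure \<Rightarrow> ereal" where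
  "beta \<epsilon> n P Q = Min ((\<lambda>M. eln (marg Q n M)) ` {M. M \<subseteq> words n \<and> marg P n M \<ge> 1 - \<epsilon>})"

definition beta_bar :: "real \<Rightarrow> (int \<Rightarrow> 'a) measure \<Rightarrow> (int \<Rightarrow> 'a) measure \<Rightarrow> ereal" where
  "beta_bar \<epsilon> P Q = limsup (\<lambda>n. ereal (1 / real n) * beta \<epsilon> n P Q)"

end

theory Submission
  imports Defs
begin

(*
  The direction 1 => 2 combines two facts.  First, sort the words of length n by their k-block
  type (the multiset of consecutive blocks of length k, together with the remainder); averaging
  over k the uniform distributions on types and within type classes gives a universal
  subprobability R_n on A^n.  For stationary P the divergence of P^(n) from R_n is at most
  n (H_k / k - inf_j H_j / j) + O(log n), so a Markov argument shows that
  P^(n) {w. R_n w < P^(n) w * exp (- n eta)} tends to 0.  Second, condition 1 forces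
  P^(n) {w. Q^(n) w > P^(n) w * exp (- n a)} to 0 for every a < h(P,Q): otherwise every set of
  P-probability at least 1 - eps would have Q-probability of order exp (- n a), contradicting
  beta_bar <= - h(P,Q) < - a.  Hence the sets {w. Q^(n) w <= R_n w * exp (- n c)}, with c just
  below h(Omega,Q), have P-probability tending to 1 for all P in Omega and Q-probability at most
  exp (- n c).

  The lower bound on the liminf holds for all sets of P-probability tending to 1, by the log-sum
  inequality.  Taking Omega = {P} gives 2 => 1, as beta_bar bounds the exponent of every such
  sequence of sets.
*)

lemma finite_words [simp]: "finite (words n :: 'a::finite list set)"
  using finite_lists_length_eq[OF finite_class.finite_UNIV, of n] by (simp add: words_def)

lemma card_words: "card (words n :: 'a::finite list set) = CARD('a) ^ n"
  using card_lists_length_eq[OF finite_class.finite_UNIV, of n] by (simp add: words_def)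

lemma process_prob_space: "process P \<Longrightarrow> prob_space P"
  unfolding process_def by simp

lemma process_finite_measure: "process P \<Longrightarrow> finite_measure P"
  using prob_space.axioms(1)[OF process_prob_space] .

lemma sets_process:
  "process (P :: (int \<Rightarrow> 'a::finite) measure) \<Longrightarrow>
     sets P = sets (PiM (UNIV :: int set) (\<lambda>_. count_space (UNIV :: 'a set)))"
  unfolding process_def by simp

lemma process_space: "process P \<Longrightarrow> space P = UNIV"
  by (simp add: sets_eq_imp_space_eq[OF sets_process] space_PiM)

lemma sets_process_coordinate:
  fixes P :: "(int \<Rightarrow> 'a::finite) measure"
  assumes "process P"
  shows "{x \<in> space P. x i = a} \<in> sets P"
proof -
  have "(\<lambda>x. x i) \<in> measurable P (count_space UNIV)"
    by (subst measurable_cong_sets[OF sets_process[OF assms] refl])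
       (rule measurable_component_singleton, simp)
  from measurable_sets[OF this, of "{a}"] show ?thesis
    by (simp add: vimage_def Int_def conj_commute)
qed

lemma sets_process_word:
  fixes P :: "(int \<Rightarrow> 'a::finite) measure"
  assumes "process P"
  shows "{x \<in> space P. map (\<lambda>i. x (f i)) [0..<k] \<in> M} \<in> sets P"
proof -
  let ?cyl = "\<lambda>w. {x \<in> space P. \<forall>i\<in>{..<k}. x (f i) = w ! i}"
  have "{x \<in> space P. map (\<lambda>i. x (f i)) [0..<k] \<in> M} = (\<Union>w\<in>M \<inter> words k. ?cyl w)"
  proof (intro set_eqI iffI)
    fix x assume "x \<in> (\<Union>w\<in>M \<inter> words k. ?cyl w)"
    then obtain w where "w \<in> M" "length w = k" "x \<in> ?cyl w" by (auto simp: words_def)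
    moreover from this have "map (\<lambda>i. x (f i)) [0..<k] = w" by (simp add: list_eq_iff_nth_eq)
    ultimately show "x \<in> {x \<in> space P. map (\<lambda>i. x (f i)) [0..<k] \<in> M}" by simp
  next
    fix x assume "x \<in> {x \<in> space P. map (\<lambda>i. x (f i)) [0..<k] \<in> M}"
    then show "x \<in> (\<Union>w\<in>M \<inter> words k. ?cyl w)"
      by (intro UN_I[of "map (\<lambda>i. x (f i)) [0..<k]"]) (auto simp: words_def)
  qed
  also have "\<dots> \<in> sets P"
    using sets_process_coordinate[OF assms]
    by (intro sets.finite_UN sets.sets_Collect_finite_All) (simp_all add: finite_subset[OF _ finite_words])
  finally show ?thesis .
qed

abbreviation word_prob :: "(int \<Rightarrow> 'a) measure \<Rightarrow> nat \<Rightarrow> 'a list \<Rightarrow> real" where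
  "word_prob P n w \<equiv> marg P n {w}"

lemma marg_nonneg: "0 \<le> marg P n M"
  unfolding marg_def by simp

lemma marg_le_1: "process P \<Longrightarrow> marg P n M \<le> 1"
  unfolding marg_def by (rule prob_space.prob_le_1[OF process_prob_space])

lemma marg_mono:
  fixes P :: "(int \<Rightarrow> 'a::finite) measure"
  assumes "process P" "M \<subseteq> M'"
  shows "marg P n M \<le> marg P n M'"
  unfolding marg_def using assms(2)
  by (intro finite_measure.finite_measure_mono[OF process_finite_measure[OF assms(1)]]
      sets_process_word[OF assms(1)]) auto

lemma marg_Un_le:
  fixes P :: "(int \<Rightarrow> 'a::finite) measure"
  assumes "process P"
  shows "marg P n (M \<union> M') \<le> marg P n M + marg P n M'"
proof -
  have "{x \<in> space P. map (\<lambda>i. x (int i)) [0..<n] \<in> M \<union> M'}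
      = {x \<in> space P. map (\<lambda>i. x (int i)) [0..<n] \<in> M}
        \<union> {x \<in> space P. map (\<lambda>i. x (int i)) [0..<n] \<in> M'}"
    by blast
  then show ?thesis unfolding marg_def
    by (simp add: measure_Un_le sets_process_word[OF assms])
qed

lemma marg_words:
  fixes P :: "(int \<Rightarrow> 'a::finite) measure"
  assumes "process P"
  shows "marg P n (words n) = 1"
proof -
  have "{x \<in> space P. map (\<lambda>i. x (int i)) [0..<n] \<in> words n} = space P"
    by (auto simp: words_def)
  then show ?thesis unfolding marg_def using prob_space.prob_space[OF process_prob_space[OF assms]] by simp
qed

lemma marg_Diff_words:
  fixes P :: "(int \<Rightarrow> 'a::finite) measure"
  assumes "process P"
  shows "marg P n (words n - M) = 1 - marg P n M"
proof -
  have "{x \<in> space P. map (\<lambda>i. x (int i)) [0..<n] \<in> words n - M}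
      = space P - {x \<in> space P. map (\<lambda>i. x (int i)) [0..<n] \<in> M}"
    by (auto simp: words_def)
  then show ?thesis unfolding marg_def
    by (simp add: prob_space.prob_compl[OF process_prob_space[OF assms]] sets_process_word[OF assms])
qed

lemma marg_eq_sum:
  fixes P :: "(int \<Rightarrow> 'a::finite) measure"
  assumes "process P" and "M \<subseteq> words n"
  shows "marg P n M = (\<Sum>w\<in>M. word_prob P n w)"
proof -
  let ?A = "\<lambda>w. {x \<in> space P. map (\<lambda>i. x (int i)) [0..<n] \<in> {w}}"
  have "?A w \<in> sets P" for w
    by (rule sets_process_word[OF assms(1)])
  then have "measure P (\<Union>w\<in>M. ?A w) = (\<Sum>w\<in>M. measure P (?A w))"
    using finite_subset[OF assms(2)]
    by (intro finite_measure.finite_measure_finite_Union[OF process_finite_measure[OF assms(1)]])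
       (auto simp: disjoint_family_on_def)
  moreover have "{x \<in> space P. map (\<lambda>i. x (int i)) [0..<n] \<in> M} = (\<Union>w\<in>M. ?A w)"
    by blast
  ultimately show ?thesis unfolding marg_def by simp
qed

lemma sum_word_prob:
  fixes P :: "(int \<Rightarrow> 'a::finite) measure"
  shows "process P \<Longrightarrow> (\<Sum>w\<in>words n. word_prob P n w) = 1"
  using marg_eq_sum[of P "words n" n] marg_words[of P n] by simp

definition stationary :: "(int \<Rightarrow> 'a::finite) measure \<Rightarrow> bool" where
  "stationary P \<longleftrightarrow> process P \<and> shift \<in> measurable P P \<and> distr P P shift = P"

lemma ergodic_process_stationary: "ergodic_process P \<Longrightarrow> stationary P"
  unfolding ergodic_process_def stationary_def by simp

lemma stationary_process: "stationary P \<Longrightarrow> process P"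
  unfolding stationary_def by simp

lemma measure_shifted_word:
  fixes P :: "(int \<Rightarrow> 'a::finite) measure"
  assumes "stationary P"
  shows "measure P {x \<in> space P. map (\<lambda>i. x (int (s + i))) [0..<k] \<in> B} = marg P k B"
proof (induction s)
  case 0
  then show ?case unfolding marg_def by simp
next
  case (Suc s)
  have P: "process P" and shift: "shift \<in> measurable P P" "distr P P shift = P"
    using assms unfolding stationary_def by auto
  let ?S = "{x \<in> space P. map (\<lambda>i. x (int (s + i))) [0..<k] \<in> B}"
  have shifted: "map (\<lambda>i. x (int (Suc s + i))) [0..<k] = map (\<lambda>i. shift x (int (s + i))) [0..<k]"
    for x :: "int \<Rightarrow> 'a"
    unfolding shift_def by (simp add: add_ac)
  have "{x \<in> space P. map (\<lambda>i. x (int (Suc s + i))) [0..<k] \<in> B} = shift -` ?S \<inter> space P"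
    using process_space[OF P] by (simp only: shifted) auto
  moreover have "measure P (shift -` ?S \<inter> space P) = measure P ?S"
    using measure_distr[OF shift(1) sets_process_word[OF P]] shift(2) by simp
  ultimately show ?case using Suc.IH by simp
qed

lemma marg_block:
  fixes P :: "(int \<Rightarrow> 'a::finite) measure"
  assumes "stationary P" "s + k \<le> n"
  shows "marg P n {w \<in> words n. take k (drop s w) \<in> B} = marg P k B"
proof -
  have "take k (drop s (map (\<lambda>i. x (int i)) [0..<n])) = map (\<lambda>i. x (int (s + i))) [0..<k]"
    for x :: "int \<Rightarrow> 'a"
    using assms(2) by (simp add: drop_map take_map list_eq_iff_nth_eq)
  then have "{x \<in> space P. map (\<lambda>i. x (int i)) [0..<n] \<in> {w \<in> words n. take k (drop s w) \<in> B}}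
      = {x \<in> space P. map (\<lambda>i. x (int (s + i))) [0..<k] \<in> B}"
    by (simp add: words_def)
  then show ?thesis
    using measure_shifted_word[OF assms(1), of s k B] by (simp add: marg_def[of P n])
qed

lemma word_prob_le_block:
  fixes P :: "(int \<Rightarrow> 'a::finite) measure"
  assumes "stationary P" "s + k \<le> n" "w \<in> words n"
  shows "word_prob P n w \<le> word_prob P k (take k (drop s w))"
proof -
  have "word_prob P n w \<le> marg P n {v \<in> words n. take k (drop s v) \<in> {take k (drop s w)}}"
    using assms(3) by (intro marg_mono[OF stationary_process[OF assms(1)]]) simp
  also have "\<dots> = word_prob P k (take k (drop s w))"
    by (rule marg_block[OF assms(1,2)])
  finally show ?thesis .
qed

lemma sum_word_prob_block:
  fixes P :: "(int \<Rightarrow> 'a::finite) measure"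
  assumes "stationary P" "s + k \<le> n"
  shows "(\<Sum>w\<in>words n. word_prob P n w * f (take k (drop s w))) = (\<Sum>b\<in>words k. word_prob P k b * f b)"
proof -
  let ?g = "\<lambda>w::'a list. take k (drop s w)"
  have "?g ` words n \<subseteq> words k"
    using assms(2) by (auto simp: words_def)
  then have "(\<Sum>w\<in>words n. word_prob P n w * f (?g w))
      = (\<Sum>b\<in>words k. \<Sum>w\<in>{w \<in> words n. ?g w = b}. word_prob P n w * f (?g w))"
    by (rule sum.group[OF finite_words finite_words, symmetric])
  also have "\<dots> = (\<Sum>b\<in>words k. (\<Sum>w\<in>{w \<in> words n. ?g w = b}. word_prob P n w) * f b)"
    by (intro sum.cong refl) (simp add: sum_distrib_right)
  also have "\<dots> = (\<Sum>b\<in>words k. word_prob P k b * f b)"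
  proof (intro sum.cong refl)
    fix b :: "'a list"
    have "(\<Sum>w\<in>{w \<in> words n. ?g w = b}. word_prob P n w) = marg P n {w \<in> words n. ?g w = b}"
      by (rule marg_eq_sum[OF stationary_process[OF assms(1)], symmetric]) auto
    also have "\<dots> = marg P n {w \<in> words n. ?g w \<in> {b}}"
      by simp
    also have "\<dots> = word_prob P k b"
      by (rule marg_block[OF assms])
    finally show "(\<Sum>w\<in>{w \<in> words n. ?g w = b}. word_prob P n w) * f b = word_prob P k b * f b"
      by simp
  qed
  finally show ?thesis .
qed

section \<open>Block types and a universal code\<close>

definition block :: "nat \<Rightarrow> 'a list \<Rightarrow> nat \<Rightarrow> 'a list" where
  "block k w j = take k (drop (j * k) w)"

lemma block_fits:
  fixes j n k :: nat
  assumes "j < n div k"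
  shows "j * k + k \<le> n"
proof -
  have "(j + 1) * k \<le> n div k * k"
    using assms by (intro mult_right_mono) auto
  also have "\<dots> \<le> n"
    by simp
  finally show ?thesis
    by simp
qed

lemma block_words: "w \<in> words n \<Longrightarrow> j < n div k \<Longrightarrow> block k w j \<in> words k"
  using block_fits[of j n k] by (auto simp: block_def words_def)

lemma sum_words_append:
  fixes f g :: "'a list \<Rightarrow> 'b::comm_semiring_1"
  shows "(\<Sum>v\<in>words (a + b). f (take a v) * g (drop a v)) = (\<Sum>x\<in>words a. f x) * (\<Sum>y\<in>words b. g y)"
proof -
  have bij: "bij_betw (\<lambda>(x, y). x @ y) (words a \<times> words b) (words (a + b))"
    by (rule bij_betw_byWitness[where f' = "\<lambda>v. (take a v, drop a v)"]) (auto simp: words_def)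
  have "(\<Sum>v\<in>words (a + b). f (take a v) * g (drop a v)) = (\<Sum>(x, y)\<in>words a \<times> words b. f x * g y)"
    by (subst sum.reindex_bij_betw[OF bij, symmetric]) (auto simp: words_def intro!: sum.cong)
  also have "\<dots> = (\<Sum>x\<in>words a. f x) * (\<Sum>y\<in>words b. g y)"
    by (simp add: sum.cartesian_product sum_product)
  finally show ?thesis .
qed

lemma sum_words_prod_blocks:
  fixes f :: "'a::finite list \<Rightarrow> 'b::comm_semiring_1"
  shows "(\<Sum>v\<in>words (m * k + r). \<Prod>j<m. f (block k v j)) = (\<Sum>x\<in>words k. f x) ^ m * of_nat (CARD('a) ^ r)"
proof (induction m)
  case 0
  then show ?case by (simp add: card_words)
next
  case (Suc m)
  have "(\<Prod>j<Suc m. f (block k v j)) = f (take k v) * (\<Prod>j<m. f (block k (drop k v) j))" for v :: "'a list"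
    unfolding prod.lessThan_Suc_shift by (simp add: block_def add.commute)
  then have "(\<Sum>v\<in>words (Suc m * k + r). \<Prod>j<Suc m. f (block k v j))
      = (\<Sum>v\<in>words (k + (m * k + r)). f (take k v) * (\<Prod>j<m. f (block k (drop k v) j)))"
    by (simp add: add.assoc)
  also have "\<dots> = (\<Sum>x\<in>words k. f x) * (\<Sum>y\<in>words (m * k + r). \<Prod>j<m. f (block k y j))"
    by (rule sum_words_append)
  finally show ?case
    using Suc.IH by (simp add: mult_ac)
qed

definition block_prob :: "(int \<Rightarrow> 'a::finite) measure \<Rightarrow> nat \<Rightarrow> nat \<Rightarrow> 'a list \<Rightarrow> real" where
  "block_prob P k n w = (\<Prod>j<n div k. word_prob P k (block k w j)) / real CARD('a) ^ (n mod k)"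

lemma block_prob_nonneg: "0 \<le> block_prob P k n w"
  unfolding block_prob_def by (intro divide_nonneg_nonneg prod_nonneg) (auto simp: marg_nonneg)

lemma sum_block_prob:
  fixes P :: "(int \<Rightarrow> 'a::finite) measure"
  assumes "process P"
  shows "(\<Sum>w\<in>words n. block_prob P k n w) = 1"
proof -
  have "(\<Sum>w\<in>words n. \<Prod>j<n div k. word_prob P k (block k w j)) = real CARD('a) ^ (n mod k)"
    using sum_words_prod_blocks[where f = "word_prob P k" and m = "n div k" and k = k and r = "n mod k"]
    by (simp add: sum_word_prob[OF assms])
  then show ?thesis
    unfolding block_prob_def sum_divide_distrib[symmetric] by simp
qed

lemma word_prob_le_block_word_prob:
  fixes P :: "(int \<Rightarrow> 'a::finite) measure"
  assumes "stationary P" "w \<in> words n" "j < n div k"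
  shows "word_prob P n w \<le> word_prob P k (block k w j)"
  unfolding block_def using word_prob_le_block[OF assms(1) block_fits[OF assms(3)] assms(2)] .

lemma block_prob_pos:
  fixes P :: "(int \<Rightarrow> 'a::finite) measure"
  assumes "stationary P" "w \<in> words n" "0 < word_prob P n w"
  shows "0 < block_prob P k n w"
  unfolding block_prob_def
  using word_prob_le_block_word_prob[OF assms(1,2)] assms(3) by (intro divide_pos_pos prod_pos) force+

lemma ln_block_prob:
  fixes P :: "(int \<Rightarrow> 'a::finite) measure"
  assumes "stationary P" "w \<in> words n" "0 < word_prob P n w"
  shows "ln (block_prob P k n w)
    = (\<Sum>j<n div k. ln (word_prob P k (block k w j))) - real (n mod k) * ln (real CARD('a))"
proof -
  have pos: "0 < word_prob P k (block k w j)" if "j \<in> {..<n div k}" for j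
    using word_prob_le_block_word_prob[OF assms(1,2)] that assms(3) by fastforce
  have "ln (block_prob P k n w)
      = ln (\<Prod>j<n div k. word_prob P k (block k w j)) - ln (real CARD('a) ^ (n mod k))"
    unfolding block_prob_def by (rule ln_divide_pos) (auto intro!: prod_pos pos)
  also have "ln (\<Prod>j<n div k. word_prob P k (block k w j)) = (\<Sum>j<n div k. ln (word_prob P k (block k w j)))"
    using pos by (intro ln_prod) (auto simp: less_le)
  finally show ?thesis
    by (simp add: ln_realpow)
qed

definition block_type :: "nat \<Rightarrow> nat \<Rightarrow> 'a list \<Rightarrow> 'a list multiset \<times> 'a list" where
  "block_type k n w = (mset (map (block k w) [0..<n div k]), drop (n div k * k) w)"

definition block_class :: "nat \<Rightarrow> nat \<Rightarrow> 'a list \<Rightarrow> 'a list set" where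
  "block_class k n w = {v \<in> words n. block_type k n v = block_type k n w}"

lemma prod_blocks_eq_prod_mset:
  "(\<Prod>j<m. f (block k w j)) = prod_mset (image_mset f (mset (map (block k w) [0..<m])))"
  by (simp add: prod_unfold_prod_mset atLeast0LessThan image_mset.compositionality comp_def)

lemma block_prob_cong:
  assumes "block_type k n v = block_type k n w"
  shows "block_prob P k n v = block_prob P k n w"
proof -
  have "mset (map (block k v) [0..<n div k]) = mset (map (block k w) [0..<n div k])"
    using assms unfolding block_type_def by (simp only: prod.inject)
  then show ?thesis
    unfolding block_prob_def prod_blocks_eq_prod_mset[of "word_prob P k"] by (simp only:)
qed

lemma card_block_class_pos:
  "w \<in> words n \<Longrightarrow> 0 < card (block_class k n (w :: 'a::finite list))"
  by (subst card_gt_0_iff) (auto simp: block_class_def)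

lemma block_prob_mult_card_block_class_le_1:
  fixes P :: "(int \<Rightarrow> 'a::finite) measure"
  assumes "process P"
  shows "block_prob P k n w * real (card (block_class k n w)) \<le> 1"
proof -
  have "(\<Sum>v\<in>block_class k n w. block_prob P k n v) = (\<Sum>v\<in>block_class k n w. block_prob P k n w)"
    by (intro sum.cong refl block_prob_cong) (simp add: block_class_def)
  then have "block_prob P k n w * real (card (block_class k n w)) = (\<Sum>v\<in>block_class k n w. block_prob P k n v)"
    by simp
  also have "\<dots> \<le> (\<Sum>v\<in>words n. block_prob P k n v)"
    by (rule sum_mono2) (auto simp: block_class_def block_prob_nonneg)
  also have "\<dots> = 1"
    by (rule sum_block_prob[OF assms])
  finally show ?thesis .
qed

lemma sum_inverse_card_block_class:
  "(\<Sum>w\<in>(words n :: 'a::finite list set). 1 / real (card (block_class k n w)))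
    = real (card (block_type k n ` (words n :: 'a list set)))"
proof -
  have "(\<Sum>w\<in>(words n :: 'a list set). 1 / real (card (block_class k n w)))
      = (\<Sum>t\<in>block_type k n ` words n.
          \<Sum>w\<in>{w \<in> words n. block_type k n w = t}. 1 / real (card (block_class k n (w :: 'a list))))"
    by (rule sum.image_gen) simp
  also have "\<dots> = (\<Sum>t\<in>block_type k n ` (words n :: 'a list set). 1)"
  proof (intro sum.cong refl)
    fix t assume "t \<in> block_type k n ` (words n :: 'a list set)"
    then obtain w :: "'a list" where w: "w \<in> words n" "t = block_type k n w"
      by blast
    then have "{v \<in> words n. block_type k n v = t} = block_class k n w"
      by (simp add: block_class_def)
    moreover have "block_class k n v = block_class k n w" if "v \<in> block_class k n w" for v
      using that by (simp add: block_class_def)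
    ultimately show "(\<Sum>v\<in>{v \<in> words n. block_type k n v = t}. 1 / real (card (block_class k n v))) = 1"
      using card_block_class_pos[OF w(1), of k] by (simp add: card_gt_0_iff)
  qed
  finally show ?thesis
    by simp
qed

lemma card_multisets_size_le:
  fixes S :: "'b set"
  assumes "finite S"
  shows "finite {M. set_mset M \<subseteq> S \<and> size M = m}"
    and "card {M. set_mset M \<subseteq> S \<and> size M = m} \<le> (m + 1) ^ card S"
proof -
  let ?Ms = "{M. set_mset M \<subseteq> S \<and> size M = m}"
  have inj: "inj_on (\<lambda>M. restrict (count M) S) ?Ms"
  proof (rule inj_onI, rule multiset_eqI)
    fix M M' x
    assume M: "M \<in> ?Ms" "M' \<in> ?Ms" and eq: "restrict (count M) S = restrict (count M') S"
    show "count M x = count M' x"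
    proof (cases "x \<in> S")
      case True
      then show ?thesis using fun_cong[OF eq, of x] by simp
    next
      case False
      then have "x \<notin># M" "x \<notin># M'" using M by auto
      then show ?thesis by (simp add: not_in_iff)
    qed
  qed
  have into: "(\<lambda>M. restrict (count M) S) ` ?Ms \<subseteq> PiE S (\<lambda>_. {0..m})"
    using count_le_size by fastforce
  have fin: "finite (PiE S (\<lambda>_. {0..m}))"
    using assms by (intro finite_PiE) auto
  show "finite ?Ms"
    by (rule inj_on_finite[OF inj into fin])
  have "card ?Ms \<le> card (PiE S (\<lambda>_. {0..m}))"
    by (rule card_inj_on_le[OF inj into fin])
  also have "\<dots> = (m + 1) ^ card S"
    using assms by (simp add: card_PiE)
  finally show "card ?Ms \<le> (m + 1) ^ card S" .
qed

definition block_type_bound :: "nat \<Rightarrow> nat \<Rightarrow> nat \<Rightarrow> nat" where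
  "block_type_bound C k n = (n div k + 1) ^ (C ^ k) * C ^ (n mod k)"

lemma block_type_bound_pos: "0 < block_type_bound CARD('a::finite) k n"
  by (simp add: block_type_bound_def)

lemma ln_block_type_bound:
  "ln (real (block_type_bound C k n)) = real C ^ k * ln (real (n div k + 1)) + real (n mod k) * ln (real C)"
  if "0 < C"
  using that by (simp add: block_type_bound_def ln_mult_pos ln_realpow)

lemma card_block_types_le:
  "card (block_type k n ` (words n :: 'a::finite list set)) \<le> block_type_bound CARD('a) k n"
proof -
  let ?Ms = "{M. set_mset M \<subseteq> (words k :: 'a list set) \<and> size M = n div k}"
  have "block_type k n ` (words n :: 'a list set) \<subseteq> ?Ms \<times> words (n mod k)"
    using block_words by (fastforce simp: block_type_def words_def minus_div_mult_eq_mod)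
  then have "card (block_type k n ` (words n :: 'a list set)) \<le> card (?Ms \<times> (words (n mod k) :: 'a list set))"
    by (intro card_mono) (simp_all add: card_multisets_size_le(1))
  also have "\<dots> \<le> block_type_bound CARD('a) k n"
    using card_multisets_size_le(2)[OF finite_words[where 'a = 'a], of k "n div k"]
    by (simp add: card_cartesian_product card_words block_type_bound_def)
  finally show ?thesis .
qed

definition type_prob :: "nat \<Rightarrow> nat \<Rightarrow> 'a::finite list \<Rightarrow> real" where
  "type_prob k n w = 1 / (real (block_type_bound CARD('a) k n) * real (card (block_class k n w)))"

definition universal_prob :: "nat \<Rightarrow> 'a::finite list \<Rightarrow> real" where
  "universal_prob n w = (\<Sum>k = 1..n. type_prob k n w) / real n"

lemma type_prob_nonneg: "0 \<le> type_prob k n w"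
  unfolding type_prob_def by simp

lemma universal_prob_nonneg: "0 \<le> universal_prob n w"
  unfolding universal_prob_def by (simp add: sum_nonneg type_prob_nonneg)

lemma sum_type_prob_le_1: "(\<Sum>w\<in>words n. type_prob k n (w :: 'a::finite list)) \<le> 1"
proof -
  have "(\<Sum>w\<in>words n. type_prob k n (w :: 'a list))
      = (\<Sum>w\<in>words n. 1 / real (card (block_class k n (w :: 'a list)))) / real (block_type_bound CARD('a) k n)"
    unfolding type_prob_def sum_divide_distrib by (simp add: mult.commute)
  also have "\<dots> \<le> 1"
    using card_block_types_le[of k n, where 'a = 'a] block_type_bound_pos[of k n, where 'a = 'a]
    by (simp add: sum_inverse_card_block_class)
  finally show ?thesis .
qed

lemma sum_universal_prob_le_1: "(\<Sum>w\<in>words n. universal_prob n (w :: 'a::finite list)) \<le> 1"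
proof (cases "n = 0")
  case False
  have "(\<Sum>w\<in>words n. universal_prob n (w :: 'a list))
      = (\<Sum>k = 1..n. \<Sum>w\<in>words n. type_prob k n (w :: 'a list)) / real n"
    unfolding universal_prob_def sum_divide_distrib[symmetric] by (rule arg_cong[where f = "\<lambda>x. x / _"], rule sum.swap)
  also have "\<dots> \<le> (\<Sum>k = 1..n. 1) / real n"
    by (intro divide_right_mono sum_mono sum_type_prob_le_1) simp
  also have "\<dots> = 1"
    using False by simp
  finally show ?thesis .
qed (simp add: universal_prob_def)

lemma block_prob_le_universal_prob:
  fixes P :: "(int \<Rightarrow> 'a::finite) measure"
  assumes "process P" "w \<in> words n" "1 \<le> k" "k \<le> n"
  shows "block_prob P k n w / (real (block_type_bound CARD('a) k n) * real n) \<le> universal_prob n w"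
proof -
  have "block_prob P k n w / real (block_type_bound CARD('a) k n) \<le> type_prob k n w"
    using block_prob_mult_card_block_class_le_1[OF assms(1), of k n w] card_block_class_pos[OF assms(2), of k]
      block_type_bound_pos[of k n, where 'a = 'a]
    by (simp add: type_prob_def field_simps)
  also have "\<dots> \<le> (\<Sum>k = 1..n. type_prob k n w)"
    using assms(3,4) by (intro member_le_sum) (simp_all add: type_prob_nonneg)
  finally have "block_prob P k n w / real (block_type_bound CARD('a) k n) / real n \<le> universal_prob n w"
    unfolding universal_prob_def by (rule divide_right_mono) simp
  then show ?thesis
    by (simp only: divide_divide_eq_left)
qed

lemma universal_prob_pos:
  fixes P :: "(int \<Rightarrow> 'a::finite) measure"
  assumes "stationary P" "w \<in> words n" "0 < word_prob P n w" "1 \<le> n"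
  shows "0 < universal_prob n w"
proof -
  have "0 < block_prob P 1 n w / (real (block_type_bound CARD('a) 1 n) * real n)"
    using block_prob_pos[OF assms(1-3)] block_type_bound_pos[of 1 n, where 'a = 'a] assms(4) by simp
  also have "\<dots> \<le> universal_prob n w"
    using assms by (intro block_prob_le_universal_prob stationary_process) auto
  finally show ?thesis .
qed

section \<open>Divergence of finite weights\<close>

(* For p > 0 = q the value is junk (ln 0 = 0), so the lemmas below assume q > 0 wherever p > 0. *)
definition kl_real :: "real \<Rightarrow> real \<Rightarrow> real" where
  "kl_real p q = (if p = 0 then 0 else p * ln (p / q))"

lemma kl_real_ge_linear:
  assumes "0 < a" "0 \<le> p" "0 \<le> q" "0 < p \<Longrightarrow> 0 < q"
  shows "p * ln a + p - a * q \<le> kl_real p q"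
proof (cases "p = 0")
  case False
  then have p: "0 < p" and q: "0 < q"
    using assms by auto
  have "ln (a * q / p) \<le> a * q / p - 1"
    using assms(1) p q by (intro ln_le_minus_one) simp
  then have "p * (ln a - ln (p / q)) \<le> p * (a * q / p - 1)"
    using assms(1) p q by (intro mult_left_mono) (simp_all add: ln_div ln_mult)
  then show ?thesis
    using p by (simp add: kl_real_def algebra_simps)
qed (use assms in \<open>simp add: kl_real_def\<close>)

lemma kl_real_ge_diff:
  "0 \<le> p \<Longrightarrow> 0 \<le> q \<Longrightarrow> (0 < p \<Longrightarrow> 0 < q) \<Longrightarrow> p - q \<le> kl_real p q"
  using kl_real_ge_linear[of 1 p q] by simp

lemma sum_kl_real_ge_tail:
  fixes p q :: "'b \<Rightarrow> real"
  assumes "finite S" "B \<subseteq> S"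
    and nonneg: "\<And>w. w \<in> S \<Longrightarrow> 0 \<le> p w \<and> 0 \<le> q w \<and> (0 < p w \<longrightarrow> 0 < q w)"
    and "sum q S \<le> 1"
    and tail: "\<And>w. w \<in> B \<Longrightarrow> 0 < p w \<and> q w < p w * exp (- t)"
  shows "t * sum p B \<le> (\<Sum>w\<in>S. kl_real (p w) (q w)) + 1"
proof -
  have termwise: "t * (if w \<in> B then p w else 0) \<le> kl_real (p w) (q w) + q w" if w: "w \<in> S" for w
  proof (cases "w \<in> B")
    case True
    then have p: "0 < p w" and q: "0 < q w" and "q w * exp t < p w"
      using tail[of w] nonneg[OF w] by (auto simp: exp_minus field_simps)
    then have "exp t < p w / q w"
      by (simp add: field_simps)
    then have "ln (exp t) < ln (p w / q w)"
      by (rule ln_strict_mono) simp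
    then have "t < ln (p w / q w)"
      by simp
    then have "t * p w \<le> kl_real (p w) (q w)"
      using p by (simp add: kl_real_def mult.commute mult_left_mono)
    then show ?thesis
      using True q by simp
  next
    case False
    then show ?thesis
      using kl_real_ge_diff[of "p w" "q w"] nonneg[OF w] by simp
  qed
  have "sum p B = (\<Sum>w\<in>S. if w \<in> B then p w else 0)"
    using assms(1,2) by (simp add: sum.inter_restrict[symmetric] Int_absorb1)
  then have "t * sum p B = (\<Sum>w\<in>S. t * (if w \<in> B then p w else 0))"
    by (simp add: sum_distrib_left)
  also have "\<dots> \<le> (\<Sum>w\<in>S. kl_real (p w) (q w) + q w)"
    by (rule sum_mono) (rule termwise)
  also have "\<dots> \<le> (\<Sum>w\<in>S. kl_real (p w) (q w)) + 1"
    using assms(4) by (simp add: sum.distrib)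
  finally show ?thesis .
qed

lemma sum_pos_if_absolutely_continuous:
  fixes p q :: "'b \<Rightarrow> real"
  assumes "finite S" "0 < sum p S" "\<And>w. w \<in> S \<Longrightarrow> 0 \<le> q w \<and> (0 < p w \<longrightarrow> 0 < q w)"
  shows "0 < sum q S"
proof -
  obtain w where w: "w \<in> S" "0 < p w"
    using sum_nonpos[of S p] assms(2) by (meson not_le)
  then have "0 < q w"
    using assms(3) by blast
  also have "q w \<le> sum q S"
    using assms(1,3) w(1) by (intro member_le_sum) auto
  finally show ?thesis .
qed

lemma log_sum_inequality:
  fixes p q :: "'b \<Rightarrow> real"
  assumes "finite S" "0 < sum p S"
    and nonneg: "\<And>w. w \<in> S \<Longrightarrow> 0 \<le> p w \<and> 0 \<le> q w \<and> (0 < p w \<longrightarrow> 0 < q w)"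
  shows "sum p S * ln (sum p S / sum q S) \<le> (\<Sum>w\<in>S. kl_real (p w) (q w))"
proof -
  have qS: "0 < sum q S"
    using nonneg by (intro sum_pos_if_absolutely_continuous[OF assms(1,2)]) auto
  let ?a = "sum p S / sum q S"
  have "(\<Sum>w\<in>S. p w * ln ?a + p w - ?a * q w) = sum p S * ln ?a + sum p S - ?a * sum q S"
    by (simp add: sum.distrib sum_subtractf sum_distrib_left sum_distrib_right)
  also have "\<dots> = sum p S * ln ?a"
    using qS by simp
  finally have "sum p S * ln ?a = (\<Sum>w\<in>S. p w * ln ?a + p w - ?a * q w)" ..
  also have "\<dots> \<le> (\<Sum>w\<in>S. kl_real (p w) (q w))"
    using assms(2) qS nonneg by (intro sum_mono kl_real_ge_linear) auto
  finally show ?thesis .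
qed

lemma sum_kl_real_ge_neg_ln:
  fixes p q :: "'b \<Rightarrow> real"
  assumes "finite S" "M \<subseteq> S" "0 < sum p M" "sum q S \<le> 1"
    and nonneg: "\<And>w. w \<in> S \<Longrightarrow> 0 \<le> p w \<and> 0 \<le> q w \<and> (0 < p w \<longrightarrow> 0 < q w)"
  shows "- sum p M * ln (sum q M) - 2 \<le> (\<Sum>w\<in>S. kl_real (p w) (q w))"
proof -
  have finM: "finite M"
    using assms(1,2) by (rule finite_subset[rotated])
  have qM: "0 < sum q M"
    using nonneg assms(2) by (intro sum_pos_if_absolutely_continuous[OF finM assms(3)]) auto
  have "sum p M - 1 \<le> kl_real (sum p M) 1"
    using assms(3) by (intro kl_real_ge_diff) simp_all
  then have "- sum p M * ln (sum q M) - 1 \<le> sum p M * ln (sum p M / sum q M)"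
    using assms(3) qM by (simp add: kl_real_def ln_div algebra_simps)
  also have "\<dots> \<le> (\<Sum>w\<in>M. kl_real (p w) (q w))"
    using nonneg assms(2) by (intro log_sum_inequality[OF finM assms(3)]) auto
  finally have inside: "- sum p M * ln (sum q M) - 1 \<le> (\<Sum>w\<in>M. kl_real (p w) (q w))" .
  have "sum q (S - M) \<le> sum q S"
    using nonneg by (intro sum_mono2[OF assms(1)]) auto
  then have "- 1 \<le> - sum q (S - M)"
    using assms(4) by simp
  also have "\<dots> \<le> (\<Sum>w\<in>S - M. p w - q w)"
    using nonneg by (simp add: sum_subtractf) (meson DiffD1 sum_nonneg)
  also have "\<dots> \<le> (\<Sum>w\<in>S - M. kl_real (p w) (q w))"
    using nonneg by (intro sum_mono kl_real_ge_diff) auto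
  finally have outside: "- 1 \<le> (\<Sum>w\<in>S - M. kl_real (p w) (q w))" .
  show ?thesis
    using inside outside sum.subset_diff[OF assms(2,1), of "\<lambda>w. kl_real (p w) (q w)"] by simp
qed

section \<open>Universal coding of stationary processes\<close>

definition block_entropy :: "(int \<Rightarrow> 'a::finite) measure \<Rightarrow> nat \<Rightarrow> real" where
  "block_entropy P n = (\<Sum>w\<in>words n. - (word_prob P n w * ln (word_prob P n w)))"

(* For stationary P this infimum is the entropy rate, as block_entropy is subadditive; only
   block_entropy_ge_entropy_rate is needed here. *)
definition entropy_rate :: "(int \<Rightarrow> 'a::finite) measure \<Rightarrow> real" where
  "entropy_rate P = (INF n\<in>{1..}. block_entropy P n / real n)"

lemma block_entropy_nonneg:
  fixes P :: "(int \<Rightarrow> 'a::finite) measure"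
  assumes "process P"
  shows "0 \<le> block_entropy P n"
  unfolding block_entropy_def
proof (rule sum_nonneg)
  fix w :: "'a list"
  have "0 \<le> word_prob P n w" "word_prob P n w \<le> 1"
    using marg_nonneg marg_le_1[OF assms] by auto
  then show "0 \<le> - (word_prob P n w * ln (word_prob P n w))"
    by (cases "word_prob P n w = 0") (auto simp: mult_nonneg_nonpos)
qed

lemma bdd_below_block_entropy_rates:
  "process P \<Longrightarrow> bdd_below ((\<lambda>n. block_entropy P n / real n) ` {1..})"
  by (rule bdd_belowI[of _ 0]) (auto simp: block_entropy_nonneg)

lemma block_entropy_ge_entropy_rate:
  fixes P :: "(int \<Rightarrow> 'a::finite) measure"
  assumes "process P" "1 \<le> n"
  shows "real n * entropy_rate P \<le> block_entropy P n"
proof -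
  have "entropy_rate P \<le> block_entropy P n / real n"
    unfolding entropy_rate_def using assms by (intro cInf_lower bdd_below_block_entropy_rates) auto
  then show ?thesis
    using assms(2) by (simp add: field_simps)
qed

lemma entropy_rate_approx:
  fixes P :: "(int \<Rightarrow> 'a::finite) measure"
  assumes "0 < e"
  obtains k where "1 \<le> k" "block_entropy P k / real k < entropy_rate P + e"
proof -
  have "Inf ((\<lambda>n. block_entropy P n / real n) ` {1..}) < entropy_rate P + e"
    unfolding entropy_rate_def using assms by simp
  from cInf_lessD[OF _ this] show ?thesis
    using that by auto
qed

lemma expected_neg_ln_block_prob:
  fixes P :: "(int \<Rightarrow> 'a::finite) measure"
  assumes "stationary P"
  shows "(\<Sum>w\<in>words n. word_prob P n w * - ln (block_prob P k n w))
    = real (n div k) * block_entropy P k + real (n mod k) * ln (real CARD('a))"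
proof -
  let ?c = "real (n mod k) * ln (real CARD('a))"
  have "(\<Sum>w\<in>words n. word_prob P n w * - ln (block_prob P k n w))
      = (\<Sum>w\<in>words n. word_prob P n w * ((\<Sum>j<n div k. - ln (word_prob P k (block k w j))) + ?c))"
  proof (intro sum.cong refl)
    fix w :: "'a list" assume w: "w \<in> words n"
    show "word_prob P n w * - ln (block_prob P k n w)
        = word_prob P n w * ((\<Sum>j<n div k. - ln (word_prob P k (block k w j))) + ?c)"
    proof (cases "word_prob P n w = 0")
      case False
      then show ?thesis
        using ln_block_prob[OF assms w, of k] marg_nonneg[of P n "{w}"] by (simp add: sum_negf)
    qed simp
  qed
  also have "\<dots> = (\<Sum>j<n div k. \<Sum>w\<in>words n. word_prob P n w * - ln (word_prob P k (block k w j)))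
      + (\<Sum>w\<in>words n. word_prob P n w) * ?c"
    by (simp add: distrib_left sum.distrib sum_distrib_left sum_distrib_right sum.swap[of _ "{..<n div k}"])
  also have "(\<Sum>j<n div k. \<Sum>w\<in>words n. word_prob P n w * - ln (word_prob P k (block k w j)))
      = (\<Sum>j<n div k. block_entropy P k)"
    unfolding block_entropy_def block_def
    using sum_word_prob_block[OF assms block_fits, of _ n k "\<lambda>b. - ln (word_prob P k b)"] by simp
  finally show ?thesis
    by (simp add: sum_word_prob[OF stationary_process[OF assms]])
qed

lemma sum_kl_real_universal_le:
  fixes P :: "(int \<Rightarrow> 'a::finite) measure"
  assumes P: "stationary P" and k: "1 \<le> k" "k \<le> n"
  defines "N \<equiv> real (block_type_bound CARD('a) k n) * real n"
  shows "(\<Sum>w\<in>words n. kl_real (word_prob P n w) (universal_prob n w))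
    \<le> - block_entropy P n + real (n div k) * block_entropy P k + real (n mod k) * ln (real CARD('a)) + ln N"
proof -
  have N: "0 < N"
    using block_type_bound_pos[of k n, where 'a = 'a] k unfolding N_def by simp
  have termwise: "kl_real (word_prob P n w) (universal_prob n w)
      \<le> word_prob P n w * ln (word_prob P n w) + word_prob P n w * - ln (block_prob P k n w) + word_prob P n w * ln N"
    if w: "w \<in> words n" for w
  proof (cases "word_prob P n w = 0")
    case False
    then have p: "0 < word_prob P n w"
      using marg_nonneg[of P n "{w}"] by simp
    have b: "0 < block_prob P k n w"
      by (rule block_prob_pos[OF P w p])
    have R: "0 < universal_prob n w"
      using k by (intro universal_prob_pos[OF P w p]) simp
    have "ln (block_prob P k n w / N) \<le> ln (universal_prob n w)"
      using block_prob_le_universal_prob[OF stationary_process[OF P] w k] b N R unfolding N_def by simp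
    then have "ln (word_prob P n w / universal_prob n w) \<le> ln (word_prob P n w) - ln (block_prob P k n w) + ln N"
      using p b N R by (simp add: ln_div)
    then have "word_prob P n w * ln (word_prob P n w / universal_prob n w)
        \<le> word_prob P n w * (ln (word_prob P n w) - ln (block_prob P k n w) + ln N)"
      using p by (intro mult_left_mono) simp_all
    then show ?thesis
      using p by (simp add: kl_real_def algebra_simps)
  qed (simp add: kl_real_def)
  have "(\<Sum>w\<in>words n. kl_real (word_prob P n w) (universal_prob n w))
      \<le> (\<Sum>w\<in>words n. word_prob P n w * ln (word_prob P n w))
        + (\<Sum>w\<in>words n. word_prob P n w * - ln (block_prob P k n w))
        + (\<Sum>w\<in>words n. word_prob P n w) * ln N"
    unfolding sum_distrib_right sum.distrib[symmetric] by (rule sum_mono) (rule termwise)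
  also have "(\<Sum>w\<in>words n. word_prob P n w * - ln (block_prob P k n w))
      = real (n div k) * block_entropy P k + real (n mod k) * ln (real CARD('a))"
    by (rule expected_neg_ln_block_prob[OF P])
  also have "(\<Sum>w\<in>words n. word_prob P n w * ln (word_prob P n w)) = - block_entropy P n"
    by (simp add: block_entropy_def sum_negf)
  finally show ?thesis
    by (simp add: sum_word_prob[OF stationary_process[OF P]])
qed

definition poorly_coded :: "(int \<Rightarrow> 'a::finite) measure \<Rightarrow> real \<Rightarrow> nat \<Rightarrow> 'a list set" where
  "poorly_coded P \<eta> n =
     {w \<in> words n. 0 < word_prob P n w \<and> universal_prob n w < word_prob P n w * exp (- (real n * \<eta>))}"

lemma marg_poorly_coded_le_sum_kl_real:
  fixes P :: "(int \<Rightarrow> 'a::finite) measure"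
  assumes P: "stationary P" and "1 \<le> n"
  shows "real n * \<eta> * marg P n (poorly_coded P \<eta> n)
    \<le> (\<Sum>w\<in>words n. kl_real (word_prob P n w) (universal_prob n w)) + 1"
proof -
  have sub: "poorly_coded P \<eta> n \<subseteq> words n"
    unfolding poorly_coded_def by blast
  have "real n * \<eta> * marg P n (poorly_coded P \<eta> n)
      = real n * \<eta> * (\<Sum>w\<in>poorly_coded P \<eta> n. word_prob P n w)"
    by (simp add: marg_eq_sum[OF stationary_process[OF P] sub])
  also have "\<dots> \<le> (\<Sum>w\<in>words n. kl_real (word_prob P n w) (universal_prob n w)) + 1"
    by (rule sum_kl_real_ge_tail[OF finite_words sub])
      (auto simp: poorly_coded_def marg_nonneg universal_prob_nonneg sum_universal_prob_le_1 mult.commute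
        intro: universal_prob_pos[OF P _ _ \<open>1 \<le> n\<close>])
  finally show ?thesis .
qed

lemma marg_poorly_coded_le:
  fixes P :: "(int \<Rightarrow> 'a::finite) measure"
  assumes P: "stationary P" and k: "1 \<le> k" "k \<le> n"
  defines "C \<equiv> real CARD('a)"
  shows "real n * \<eta> * marg P n (poorly_coded P \<eta> n)
    \<le> real n * (block_entropy P k / real k - entropy_rate P) + (2 * real k * ln C + C ^ k + 1) * (ln (real n) + 1)"
proof -
  have n: "1 \<le> n" "0 < real n" "0 \<le> ln (real n)"
    using k by auto
  have C: "0 < CARD('a)" "1 \<le> C" "0 \<le> ln C"
    unfolding C_def by simp_all
  note markov = marg_poorly_coded_le_sum_kl_real[OF P n(1), of \<eta>]
  have "ln (real (block_type_bound CARD('a) k n) * real n)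
      = C ^ k * ln (real (n div k + 1)) + real (n mod k) * ln C + ln (real n)"
    using block_type_bound_pos[of k n, where 'a = 'a] n C
    by (simp add: ln_mult_pos ln_block_type_bound C_def)
  then have kl: "(\<Sum>w\<in>words n. kl_real (word_prob P n w) (universal_prob n w))
      \<le> - block_entropy P n + real (n div k) * block_entropy P k + 2 * (real (n mod k) * ln C)
        + C ^ k * ln (real (n div k + 1)) + ln (real n)"
    using sum_kl_real_universal_le[OF P k] unfolding C_def by simp
  have H: "- block_entropy P n \<le> - (real n * entropy_rate P)"
    using block_entropy_ge_entropy_rate[OF stationary_process[OF P] n(1)] by simp
  have "real (n div k) * real k \<le> real n"
    by (metis of_nat_le_iff of_nat_mult div_times_less_eq_dividend)
  then have "real (n div k) * real k * (block_entropy P k / real k) \<le> real n * (block_entropy P k / real k)"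
    using block_entropy_nonneg[OF stationary_process[OF P], of k] by (intro mult_right_mono) simp_all
  then have Hk: "real (n div k) * block_entropy P k \<le> real n * (block_entropy P k / real k)"
    using k by simp
  have "real (n mod k) * ln C \<le> real k * ln C"
    using k C by (intro mult_right_mono) simp_all
  also have "\<dots> \<le> real k * ln C * (ln (real n) + 1)"
    using mult_left_mono[of 1 "ln (real n) + 1" "real k * ln C"] C n by simp
  finally have tail: "real (n mod k) * ln C \<le> real k * ln C * (ln (real n) + 1)" .
  have "real (n div k + 1) \<le> real (2 * n)"
    using div_le_dividend[of n k] n(1) by (subst of_nat_le_iff) linarith
  then have "ln (real (n div k + 1)) \<le> ln (2 * real n)"
    using n by (subst ln_le_cancel_iff) simp_all
  also have "\<dots> \<le> ln (real n) + 1"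
    using n ln_le_minus_one[of 2] by (simp add: ln_mult_pos)
  finally have types: "C ^ k * ln (real (n div k + 1)) \<le> C ^ k * (ln (real n) + 1)"
    using C by (intro mult_left_mono) simp_all
  show ?thesis
    using markov kl H Hk tail types n by (simp add: algebra_simps)
qed

lemma marg_poorly_coded_tendsto_0:
  fixes P :: "(int \<Rightarrow> 'a::finite) measure"
  assumes P: "stationary P" and "0 < \<eta>"
  shows "(\<lambda>n. marg P n (poorly_coded P \<eta> n)) \<longlonglongrightarrow> 0"
proof (rule order_tendstoI)
  fix e :: real assume "0 < e"
  obtain k where k: "1 \<le> k" "block_entropy P k / real k < entropy_rate P + e * \<eta> / 2"
    using entropy_rate_approx[of "e * \<eta> / 2" P] \<open>0 < e\<close> \<open>0 < \<eta>\<close> by auto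
  define c where "c = 2 * real k * ln (real CARD('a)) + real CARD('a) ^ k + 1"
  have "(\<lambda>n. c / \<eta> * (1 / real n) + c / \<eta> * (ln (real n) / real n)) \<longlonglongrightarrow> c / \<eta> * 0 + c / \<eta> * 0"
    by (intro tendsto_intros lim_ln_over_n)
  then have "eventually (\<lambda>n. c / \<eta> * (1 / real n) + c / \<eta> * (ln (real n) / real n) < e / 2) sequentially"
    using \<open>0 < e\<close> by (intro order_tendstoD(2)) auto
  then show "eventually (\<lambda>n. marg P n (poorly_coded P \<eta> n) < e) sequentially"
    using eventually_ge_at_top[of k]
  proof eventually_elim
    case (elim n)
    have n: "0 < real n"
      using elim(2) k(1) by simp
    have "real n * \<eta> * marg P n (poorly_coded P \<eta> n)
        \<le> real n * (block_entropy P k / real k - entropy_rate P) + c * (ln (real n) + 1)"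
      unfolding c_def by (rule marg_poorly_coded_le[OF P k(1) elim(2)])
    also have "\<dots> < real n * \<eta> * e"
    proof -
      have "real n * \<eta> * e = real n * (e * \<eta> / 2) + real n * (e * \<eta> / 2)"
        by (simp add: field_simps)
      moreover have "real n * (block_entropy P k / real k - entropy_rate P) < real n * (e * \<eta> / 2)"
        using k(2) by (intro mult_strict_left_mono[OF _ n]) linarith
      moreover have "c * (ln (real n) + 1) < real n * (e * \<eta> / 2)"
        using elim(1) n \<open>0 < \<eta>\<close> by (simp add: field_simps)
      ultimately show ?thesis
        by linarith
    qed
    finally show ?case
      using n \<open>0 < \<eta>\<close> by (simp add: mult.commute)
  qed
qed (simp add: marg_nonneg less_le_trans)

section \<open>Relative entropy rates\<close>

lemma relent_finiteD:
  fixes P Q :: "(int \<Rightarrow> 'a::finite) measure"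
  assumes "relent P Q n \<noteq> \<infinity>"
  shows "\<forall>w\<in>words n. 0 < word_prob P n w \<longrightarrow> 0 < word_prob Q n w"
    and "relent P Q n = ereal (\<Sum>w\<in>words n. kl_real (word_prob P n w) (word_prob Q n w))"
proof -
  show abs_cont: "\<forall>w\<in>words n. 0 < word_prob P n w \<longrightarrow> 0 < word_prob Q n w"
  proof (intro ballI impI, rule ccontr)
    fix w assume w: "w \<in> words n" "0 < word_prob P n w" "\<not> 0 < word_prob Q n w"
    then have "kl_term (word_prob P n w) (word_prob Q n w) = \<infinity>"
      using marg_nonneg[of Q n "{w}"] by (simp add: kl_term_def)
    then have "relent P Q n = \<infinity>"
      unfolding relent_def using w(1) by (subst sum_Pinfty) auto
    then show False
      using assms by simp
  qed
  have "kl_term (word_prob P n w) (word_prob Q n w) = ereal (kl_real (word_prob P n w) (word_prob Q n w))"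
    if "w \<in> words n" for w
    using abs_cont that marg_nonneg[of P n "{w}"] by (auto simp: kl_term_def kl_real_def less_le)
  then show "relent P Q n = ereal (\<Sum>w\<in>words n. kl_real (word_prob P n w) (word_prob Q n w))"
    unfolding relent_def by (simp add: sum_ereal[symmetric] del: sum_ereal)
qed

lemma relent_nonneg:
  fixes P Q :: "(int \<Rightarrow> 'a::finite) measure"
  assumes "process P" "process Q"
  shows "0 \<le> relent P Q n"
proof (cases "relent P Q n = \<infinity>")
  case False
  have "(\<Sum>w\<in>words n. word_prob P n w) * ln ((\<Sum>w\<in>words n. word_prob P n w) / (\<Sum>w\<in>words n. word_prob Q n w))
      \<le> (\<Sum>w\<in>words n. kl_real (word_prob P n w) (word_prob Q n w))"
    using relent_finiteD(1)[OF False] marg_nonneg sum_word_prob[OF assms(1)]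
    by (intro log_sum_inequality) auto
  then show ?thesis
    using relent_finiteD(2)[OF False] sum_word_prob[OF assms(1)] sum_word_prob[OF assms(2)] by simp
qed simp

lemma tendsto_hrate: "rate_exists P Q \<Longrightarrow> relent_rate_seq P Q \<longlonglongrightarrow> hrate P Q"
  unfolding rate_exists_def hrate_def using limI by blast

lemma hrate_nonneg:
  fixes P Q :: "(int \<Rightarrow> 'a::finite) measure"
  assumes "process P" "process Q" "rate_exists P Q"
  shows "0 \<le> hrate P Q"
  using relent_nonneg[OF assms(1,2)]
  by (intro LIMSEQ_le_const[OF tendsto_hrate[OF assms(3)]]) (simp add: relent_rate_seq_def)

lemma hrate_set_singleton: "hrate_set {P} Q = hrate P Q"
  unfolding hrate_set_def by simp

lemma hrate_set_nonneg:
  fixes Q :: "(int \<Rightarrow> 'a::finite) measure"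
  assumes "process Q" "\<forall>P\<in>\<Omega>. process P \<and> rate_exists P Q"
  shows "0 \<le> hrate_set \<Omega> Q"
  unfolding hrate_set_def using assms hrate_nonneg by (blast intro: INF_greatest)

lemma ln_marg_ge_relent:
  fixes P Q :: "(int \<Rightarrow> 'a::finite) measure"
  assumes P: "process P" and Q: "process Q"
    and fin: "relent P Q n \<noteq> \<infinity>" and M: "M \<subseteq> words n" "0 < marg P n M"
  shows "0 < marg Q n M"
    and "- (real_of_ereal (relent P Q n) + 2) / marg P n M \<le> ln (marg Q n M)"
proof -
  have nonneg: "0 \<le> word_prob P n w \<and> 0 \<le> word_prob Q n w \<and> (0 < word_prob P n w \<longrightarrow> 0 < word_prob Q n w)"
    if "w \<in> words n" for w
    using relent_finiteD(1)[OF fin] that marg_nonneg by blast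
  have pM: "0 < (\<Sum>w\<in>M. word_prob P n w)"
    using M(2) marg_eq_sum[OF P M(1)] by simp
  have "0 < (\<Sum>w\<in>M. word_prob Q n w)"
    using nonneg M(1) by (intro sum_pos_if_absolutely_continuous[OF finite_subset[OF M(1) finite_words] pM]) blast
  then show "0 < marg Q n M"
    using marg_eq_sum[OF Q M(1)] by simp
  have "- (\<Sum>w\<in>M. word_prob P n w) * ln (\<Sum>w\<in>M. word_prob Q n w) - 2
      \<le> (\<Sum>w\<in>words n. kl_real (word_prob P n w) (word_prob Q n w))"
    by (rule sum_kl_real_ge_neg_ln[OF finite_words M(1) pM]) (simp_all add: sum_word_prob[OF Q] nonneg)
  then have "- (real_of_ereal (relent P Q n) + 2) \<le> marg P n M * ln (marg Q n M)"
    using relent_finiteD(2)[OF fin] marg_eq_sum[OF P M(1)] marg_eq_sum[OF Q M(1)] by simp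
  then show "- (real_of_ereal (relent P Q n) + 2) / marg P n M \<le> ln (marg Q n M)"
    using M(2) by (simp add: divide_le_eq mult.commute)
qed

lemma log_marg_rate_ge:
  fixes P Q :: "(int \<Rightarrow> 'a::finite) measure"
  assumes "process P" "process Q" "1 \<le> n" "relent_rate_seq P Q n \<noteq> \<infinity>"
    and "M \<subseteq> words n" "0 < marg P n M"
  shows "ereal (- (real_of_ereal (relent_rate_seq P Q n) + 2 / real n) / marg P n M)
    \<le> ereal (1 / real n) * eln (marg Q n M)"
proof -
  have n: "0 < real n"
    using assms(3) by simp
  have fin: "relent P Q n \<noteq> \<infinity>"
    using assms(4) n by (auto simp: relent_rate_seq_def)
  note bound = ln_marg_ge_relent[OF assms(1,2) fin assms(5,6)]
  obtain T where T: "relent P Q n = ereal T"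
    using fin relent_nonneg[OF assms(1,2), of n] by (cases "relent P Q n") auto
  have "- (real_of_ereal (relent_rate_seq P Q n) + 2 / real n) / marg P n M
      = - (T + 2) / marg P n M / real n"
    using n by (simp add: relent_rate_seq_def T field_simps) (simp add: minus_divide_left)
  also have "\<dots> \<le> ln (marg Q n M) / real n"
    using bound(2) n T by (intro divide_right_mono) auto
  finally show ?thesis
    using bound(1) by (simp add: eln_def)
qed

lemma liminf_log_marg_ge_hrate:
  fixes P Q :: "(int \<Rightarrow> 'a::finite) measure"
  assumes P: "process P" and Q: "process Q" and rate: "rate_exists P Q"
    and M: "\<forall>n. M n \<subseteq> words n" "(\<lambda>n. marg P n (M n)) \<longlonglongrightarrow> 1"
  shows "- hrate P Q \<le> liminf (\<lambda>n. ereal (1 / real n) * eln (marg Q n (M n)))"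
proof (cases "hrate P Q")
  case (real h)
  define g where "g n = - (real_of_ereal (relent_rate_seq P Q n) + 2 / real n) / marg P n (M n)" for n
  have "g \<longlonglongrightarrow> - (h + 0) / 1"
    unfolding g_def using tendsto_hrate[OF rate] real M(2)
    by (intro tendsto_intros lim_real_of_ereal tendsto_divide_0[OF tendsto_const] filterlim_real_sequentially)
      simp_all
  then have "liminf (\<lambda>n. ereal (g n)) = ereal (- h)"
    by (intro lim_imp_Liminf) (simp_all add: tendsto_ereal)
  moreover have "eventually (\<lambda>n. ereal (g n) \<le> ereal (1 / real n) * eln (marg Q n (M n))) sequentially"
  proof -
    have "eventually (\<lambda>n. relent_rate_seq P Q n < ereal (h + 1)) sequentially"
      using tendsto_hrate[OF rate] real by (intro order_tendstoD(2)) auto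
    moreover have "eventually (\<lambda>n. 0 < marg P n (M n)) sequentially"
      using M(2) by (rule order_tendstoD(1)) simp
    ultimately show ?thesis
      using eventually_ge_at_top[of 1]
    proof eventually_elim
      case (elim n)
      show ?case
        unfolding g_def by (rule log_marg_rate_ge[OF P Q]) (use elim M(1) in auto)
    qed
  qed
  then have "liminf (\<lambda>n. ereal (g n)) \<le> liminf (\<lambda>n. ereal (1 / real n) * eln (marg Q n (M n)))"
    by (rule Liminf_mono)
  ultimately show ?thesis
    using real by simp
next
  case MInf
  then show ?thesis
    using hrate_nonneg[OF P Q rate] by simp
qed simp

lemma liminf_log_marg_ge_hrate_set:
  fixes Q :: "(int \<Rightarrow> 'a::finite) measure"
  assumes "process Q" "\<forall>P\<in>\<Omega>. process P \<and> rate_exists P Q"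
    and "\<forall>n. M n \<subseteq> words n" "\<forall>P\<in>\<Omega>. (\<lambda>n. marg P n (M n)) \<longlonglongrightarrow> 1"
  shows "- hrate_set \<Omega> Q \<le> liminf (\<lambda>n. ereal (1 / real n) * eln (marg Q n (M n)))"
proof -
  have "- liminf (\<lambda>n. ereal (1 / real n) * eln (marg Q n (M n))) \<le> hrate_set \<Omega> Q"
    unfolding hrate_set_def
  proof (rule INF_greatest)
    fix P assume "P \<in> \<Omega>"
    then have "- hrate P Q \<le> liminf (\<lambda>n. ereal (1 / real n) * eln (marg Q n (M n)))"
      using assms by (intro liminf_log_marg_ge_hrate) auto
    then show "- liminf (\<lambda>n. ereal (1 / real n) * eln (marg Q n (M n))) \<le> hrate P Q"
      by (simp add: ereal_uminus_le_reorder)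
  qed
  then show ?thesis
    by (simp add: ereal_uminus_le_reorder)
qed

section \<open>Hypothesis testing exponents\<close>

lemma finite_beta_candidates: "finite {M. M \<subseteq> (words n :: 'a::finite list set) \<and> 1 - \<epsilon> \<le> marg P n M}"
  by (rule finite_subset[of _ "Pow (words n)"]) auto

lemma beta_le:
  fixes P :: "(int \<Rightarrow> 'a::finite) measure"
  assumes "M \<subseteq> words n" "1 - \<epsilon> \<le> marg P n M"
  shows "beta \<epsilon> n P Q \<le> eln (marg Q n M)"
  unfolding beta_def using assms finite_beta_candidates by (intro Min_le) auto

lemma beta_ge:
  fixes P Q :: "(int \<Rightarrow> 'a::finite) measure"
  assumes "process P" "0 < \<epsilon>" "0 < c"
    and "\<And>M. M \<subseteq> words n \<Longrightarrow> 1 - \<epsilon> \<le> marg P n M \<Longrightarrow> c \<le> marg Q n M"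
  shows "ereal (ln c) \<le> beta \<epsilon> n P Q"
  unfolding beta_def
proof (subst Min_ge_iff)
  have "words n \<in> {M. M \<subseteq> (words n :: 'a list set) \<and> 1 - \<epsilon> \<le> marg P n M}"
    using marg_words[OF assms(1)] assms(2) by simp
  then show "(\<lambda>M. eln (marg Q n M)) ` {M. M \<subseteq> words n \<and> 1 - \<epsilon> \<le> marg P n M} \<noteq> {}"
    by blast
  show "\<forall>b\<in>(\<lambda>M. eln (marg Q n M)) ` {M. M \<subseteq> words n \<and> 1 - \<epsilon> \<le> marg P n M}. ereal (ln c) \<le> b"
  proof
    fix b assume "b \<in> (\<lambda>M. eln (marg Q n M)) ` {M. M \<subseteq> words n \<and> 1 - \<epsilon> \<le> marg P n M}"
    then obtain M where M: "M \<subseteq> words n" "1 - \<epsilon> \<le> marg P n M" "b = eln (marg Q n M)"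
      by blast
    have "c \<le> marg Q n M"
      using M(1,2) by (rule assms(4))
    then show "ereal (ln c) \<le> b"
      using assms(3) M(3) by (simp add: eln_def)
  qed
qed (simp add: finite_beta_candidates)

lemma beta_bar_le_limsup:
  fixes P Q :: "(int \<Rightarrow> 'a::finite) measure"
  assumes "0 < \<epsilon>" "\<forall>n. M n \<subseteq> words n" "(\<lambda>n. marg P n (M n)) \<longlonglongrightarrow> 1"
  shows "beta_bar \<epsilon> P Q \<le> limsup (\<lambda>n. ereal (1 / real n) * eln (marg Q n (M n)))"
  unfolding beta_bar_def
proof (rule Limsup_mono)
  have "eventually (\<lambda>n. 1 - \<epsilon> < marg P n (M n)) sequentially"
    using assms(3) by (rule order_tendstoD(1)) (use assms(1) in simp)
  then show "eventually (\<lambda>n. ereal (1 / real n) * beta \<epsilon> n P Q \<le> ereal (1 / real n) * eln (marg Q n (M n))) sequentially"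
    by eventually_elim (simp add: ereal_mult_left_mono beta_le assms(2))
qed

lemma ereal_le_uminus_approx:
  fixes x h :: ereal
  assumes approx: "\<And>\<eta>. 0 < \<eta> \<Longrightarrow> if h < \<infinity> then x \<le> - h + ereal \<eta> else x \<le> ereal (- 1 / \<eta>)"
  shows "x \<le> - h"
proof (cases "h < \<infinity>")
  case True
  show ?thesis
  proof (rule ereal_le_epsilon2)
    fix \<eta> :: real assume "0 < \<eta>"
    then show "x \<le> - h + ereal \<eta>"
      using approx[of \<eta>] True by simp
  qed
next
  case False
  have "x \<le> ereal B" for B
  proof -
    have "x \<le> ereal (- 1 / (1 / (\<bar>B\<bar> + 1)))"
      using approx[of "1 / (\<bar>B\<bar> + 1)"] False by (simp del: minus_divide_left)
    also have "\<dots> \<le> ereal B"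
      by (cases "0 \<le> B") simp_all
    finally show ?thesis .
  qed
  then have "x = - \<infinity>"
    by (rule ereal_bot)
  then show ?thesis
    by simp
qed

lemma beta_bar_le_neg_hrate:
  fixes P Q :: "(int \<Rightarrow> 'a::finite) measure"
  assumes "0 < \<epsilon>"
    and sets: "\<And>\<eta>. 0 < \<eta> \<Longrightarrow> \<exists>M :: nat \<Rightarrow> 'a list set. (\<forall>n. M n \<subseteq> words n) \<and>
      (\<lambda>n. marg P n (M n)) \<longlonglongrightarrow> 1 \<and>
      (if hrate P Q < \<infinity>
       then limsup (\<lambda>n. ereal (1 / real n) * eln (marg Q n (M n))) \<le> - hrate P Q + ereal \<eta>
       else limsup (\<lambda>n. ereal (1 / real n) * eln (marg Q n (M n))) \<le> ereal (- 1 / \<eta>))"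
  shows "beta_bar \<epsilon> P Q \<le> - hrate P Q"
proof (rule ereal_le_uminus_approx)
  fix \<eta> :: real assume "0 < \<eta>"
  from sets[OF this] obtain M :: "nat \<Rightarrow> 'a list set"
    where M: "\<forall>n. M n \<subseteq> words n" "(\<lambda>n. marg P n (M n)) \<longlonglongrightarrow> 1"
      and limsup: "if hrate P Q < \<infinity>
        then limsup (\<lambda>n. ereal (1 / real n) * eln (marg Q n (M n))) \<le> - hrate P Q + ereal \<eta>
        else limsup (\<lambda>n. ereal (1 / real n) * eln (marg Q n (M n))) \<le> ereal (- 1 / \<eta>)"
    by blast
  show "if hrate P Q < \<infinity> then beta_bar \<epsilon> P Q \<le> - hrate P Q + ereal \<eta>
      else beta_bar \<epsilon> P Q \<le> ereal (- 1 / \<eta>)"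
    using limsup order.trans[OF beta_bar_le_limsup[OF \<open>0 < \<epsilon>\<close> M]]
    by (cases "hrate P Q < \<infinity>") simp_all
qed

definition high_ratio_words :: "(int \<Rightarrow> 'a::finite) measure \<Rightarrow> (int \<Rightarrow> 'a) measure \<Rightarrow> real \<Rightarrow> nat \<Rightarrow> 'a list set" where
  "high_ratio_words P Q a n = {w \<in> words n. word_prob P n w * exp (- (real n * a)) < word_prob Q n w}"

lemma marg_ge_if_high_ratio:
  fixes P Q :: "(int \<Rightarrow> 'a::finite) measure"
  assumes P: "process P" and Q: "process Q"
    and M: "M \<subseteq> words n" "1 - \<epsilon> \<le> marg P n M"
    and S: "\<delta> \<le> marg P n (high_ratio_words P Q a n)" and "\<epsilon> \<le> \<delta> / 2"
  shows "\<delta> / 2 * exp (- (real n * a)) \<le> marg Q n M"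
proof -
  let ?S = "high_ratio_words P Q a n"
  have S_sub: "?S \<subseteq> words n" and SM_sub: "?S \<inter> M \<subseteq> words n"
    unfolding high_ratio_words_def by blast+
  have "marg P n ?S \<le> marg P n ((?S \<inter> M) \<union> (words n - M))"
    using S_sub by (intro marg_mono[OF P]) blast
  also have "\<dots> \<le> marg P n (?S \<inter> M) + marg P n (words n - M)"
    by (rule marg_Un_le[OF P])
  finally have "\<delta> / 2 \<le> marg P n (?S \<inter> M)"
    using S M(2) \<open>\<epsilon> \<le> \<delta> / 2\<close> marg_Diff_words[OF P, of n M] by linarith
  then have "\<delta> / 2 * exp (- (real n * a)) \<le> (\<Sum>w\<in>?S \<inter> M. word_prob P n w) * exp (- (real n * a))"
    by (simp add: marg_eq_sum[OF P SM_sub])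
  also have "\<dots> \<le> (\<Sum>w\<in>?S \<inter> M. word_prob Q n w)"
    unfolding sum_distrib_right by (rule sum_mono) (simp add: high_ratio_words_def less_imp_le)
  also have "\<dots> = marg Q n (?S \<inter> M)"
    by (rule marg_eq_sum[OF Q SM_sub, symmetric])
  also have "\<dots> \<le> marg Q n M"
    by (rule marg_mono[OF Q]) simp
  finally show ?thesis .
qed

lemma marg_high_ratio_tendsto_0:
  fixes P Q :: "(int \<Rightarrow> 'a::finite) measure"
  assumes P: "process P" and Q: "process Q"
    and beta: "\<forall>\<epsilon>. 0 < \<epsilon> \<and> \<epsilon> < 1 \<longrightarrow> beta_bar \<epsilon> P Q \<le> - hrate P Q"
    and a: "ereal a < hrate P Q"
  shows "(\<lambda>n. marg P n (high_ratio_words P Q a n)) \<longlonglongrightarrow> 0"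
proof (rule order_tendstoI)
  fix \<delta> :: real assume "0 < \<delta>"
  define \<epsilon> where "\<epsilon> = min (\<delta> / 2) (1 / 2)"
  have \<epsilon>: "0 < \<epsilon>" "\<epsilon> < 1" "\<epsilon> \<le> \<delta> / 2"
    using \<open>0 < \<delta>\<close> unfolding \<epsilon>_def by auto
  obtain b where b: "ereal a < ereal b" "ereal b < hrate P Q"
    using ereal_dense2[OF a] by blast
  have "beta_bar \<epsilon> P Q < ereal (- b)"
    using beta \<epsilon> b(2) by (cases "hrate P Q") (auto intro: order.strict_trans1)
  then have rate: "eventually (\<lambda>n. ereal (1 / real n) * beta \<epsilon> n P Q < ereal (- b)) sequentially"
    unfolding beta_bar_def by (rule Limsup_lessD)
  have "(\<lambda>n. ln (\<delta> / 2) * (1 / real n)) \<longlonglongrightarrow> ln (\<delta> / 2) * 0"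
    by (intro tendsto_intros)
  then have small: "eventually (\<lambda>n. a - b < ln (\<delta> / 2) * (1 / real n)) sequentially"
    by (rule order_tendstoD(1)) (use b(1) in simp)
  show "eventually (\<lambda>n. marg P n (high_ratio_words P Q a n) < \<delta>) sequentially"
    using rate small eventually_ge_at_top[of 1]
  proof eventually_elim
    case (elim n)
    show ?case
    proof (rule ccontr)
      assume "\<not> marg P n (high_ratio_words P Q a n) < \<delta>"
      then have "ereal (ln (\<delta> / 2 * exp (- (real n * a)))) \<le> beta \<epsilon> n P Q"
        using \<open>0 < \<delta>\<close> \<epsilon>(1,3) by (intro beta_ge[OF P] marg_ge_if_high_ratio[OF P Q]) simp_all
      moreover have "ln (\<delta> / 2 * exp (- (real n * a))) = ln (\<delta> / 2) - real n * a"
        using \<open>0 < \<delta>\<close> by (subst ln_mult_pos) simp_all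
      ultimately have "ereal (1 / real n) * ereal (ln (\<delta> / 2) - real n * a) \<le> ereal (1 / real n) * beta \<epsilon> n P Q"
        by (intro ereal_mult_left_mono) simp_all
      also have "\<dots> < ereal (- b)"
        by (rule elim(1))
      finally show False
        using elim(2,3) by (simp add: field_simps)
    qed
  qed
qed (simp add: marg_nonneg less_le_trans)

section \<open>Test sets\<close>

definition test_set :: "(int \<Rightarrow> 'a::finite) measure \<Rightarrow> real \<Rightarrow> nat \<Rightarrow> 'a list set" where
  "test_set Q c n = {w \<in> words n. word_prob Q n w \<le> universal_prob n w * exp (- (real n * c))}"

lemma marg_test_set_le:
  fixes Q :: "(int \<Rightarrow> 'a::finite) measure"
  assumes "process Q"
  shows "marg Q n (test_set Q c n) \<le> exp (- (real n * c))"
proof -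
  have sub: "test_set Q c n \<subseteq> words n"
    unfolding test_set_def by blast
  have "marg Q n (test_set Q c n) \<le> (\<Sum>w\<in>test_set Q c n. universal_prob n w * exp (- (real n * c)))"
    unfolding marg_eq_sum[OF assms sub] by (rule sum_mono) (simp add: test_set_def)
  also have "\<dots> \<le> (\<Sum>w\<in>words n. universal_prob n (w :: 'a list)) * exp (- (real n * c))"
    unfolding sum_distrib_right by (rule sum_mono2[OF finite_words sub]) (simp add: universal_prob_nonneg)
  also have "\<dots> \<le> exp (- (real n * c))"
    using sum_universal_prob_le_1[of n, where 'a = 'a] by simp
  finally show ?thesis .
qed

lemma limsup_log_marg_test_set_le:
  fixes Q :: "(int \<Rightarrow> 'a::finite) measure"
  assumes "process Q"
  shows "limsup (\<lambda>n. ereal (1 / real n) * eln (marg Q n (test_set Q c n))) \<le> ereal (- c)"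
proof (rule Limsup_bounded)
  show "eventually (\<lambda>n. ereal (1 / real n) * eln (marg Q n (test_set Q c n)) \<le> ereal (- c)) sequentially"
    using eventually_ge_at_top[of 1]
  proof eventually_elim
    case (elim n)
    show ?case
    proof (cases "marg Q n (test_set Q c n) = 0")
      case False
      then have "ln (marg Q n (test_set Q c n)) \<le> ln (exp (- (real n * c)))"
        using marg_test_set_le[OF assms, of n c] marg_nonneg[of Q n]
        by (subst ln_le_cancel_iff) (simp_all add: less_le)
      then have "ln (marg Q n (test_set Q c n)) \<le> - (real n * c)"
        by simp
      then show ?thesis
        using False elim by (simp add: eln_def field_simps)
    qed (use elim in \<open>simp add: eln_def\<close>)
  qed
qed

lemma words_Diff_test_set_subset:
  fixes P Q :: "(int \<Rightarrow> 'a::finite) measure"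
  shows "words n - test_set Q c n \<subseteq> high_ratio_words P Q (c + \<eta>) n \<union> poorly_coded P \<eta> n"
proof
  fix w assume "w \<in> words n - test_set Q c n"
  then have w: "w \<in> words n" and Q_big: "universal_prob n w * exp (- (real n * c)) < word_prob Q n w"
    unfolding test_set_def by auto
  show "w \<in> high_ratio_words P Q (c + \<eta>) n \<union> poorly_coded P \<eta> n"
  proof (rule ccontr)
    assume not_SB: "w \<notin> high_ratio_words P Q (c + \<eta>) n \<union> poorly_coded P \<eta> n"
    then have "word_prob Q n w \<le> word_prob P n w * exp (- (real n * (c + \<eta>)))"
      using w by (auto simp: high_ratio_words_def not_less)
    also have "\<dots> = word_prob P n w * exp (- (real n * \<eta>)) * exp (- (real n * c))"
      by (simp add: algebra_simps flip: exp_add)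
    also have "\<dots> \<le> universal_prob n w * exp (- (real n * c))"
    proof (rule mult_right_mono)
      show "word_prob P n w * exp (- (real n * \<eta>)) \<le> universal_prob n w"
      proof (cases "word_prob P n w = 0")
        case False
        then show ?thesis
          using not_SB w marg_nonneg[of P n "{w}"] by (simp add: poorly_coded_def not_less)
      qed (simp add: universal_prob_nonneg)
    qed simp
    finally show False
      using Q_big by simp
  qed
qed

lemma marg_test_set_tendsto_1:
  fixes P Q :: "(int \<Rightarrow> 'a::finite) measure"
  assumes P: "stationary P" and Q: "process Q"
    and beta: "\<forall>\<epsilon>. 0 < \<epsilon> \<and> \<epsilon> < 1 \<longrightarrow> beta_bar \<epsilon> P Q \<le> - hrate P Q"
    and "0 < \<eta>" and c: "ereal (c + \<eta>) < hrate P Q"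
  shows "(\<lambda>n. marg P n (test_set Q c n)) \<longlonglongrightarrow> 1"
proof -
  let ?S = "\<lambda>n. high_ratio_words P Q (c + \<eta>) n" and ?B = "\<lambda>n. poorly_coded P \<eta> n"
  have cover: "words n - test_set Q c n \<subseteq> ?S n \<union> ?B n" for n
    by (rule words_Diff_test_set_subset)
  have lower: "1 - (marg P n (?S n) + marg P n (?B n)) \<le> marg P n (test_set Q c n)" for n
    using marg_mono[OF stationary_process[OF P] cover[of n], of n]
      marg_Un_le[OF stationary_process[OF P], of n "?S n" "?B n"]
      marg_Diff_words[OF stationary_process[OF P], of n "test_set Q c n"]
    by linarith
  have "(\<lambda>n. 1 - (marg P n (?S n) + marg P n (?B n))) \<longlonglongrightarrow> 1 - (0 + 0)"
    using marg_high_ratio_tendsto_0[OF stationary_process[OF P] Q beta c]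
      marg_poorly_coded_tendsto_0[OF P \<open>0 < \<eta>\<close>]
    by (intro tendsto_diff tendsto_add tendsto_const)
  then have lim: "(\<lambda>n. 1 - (marg P n (?S n) + marg P n (?B n))) \<longlonglongrightarrow> 1"
    by simp
  show ?thesis
    by (rule tendsto_sandwich[OF always_eventually always_eventually lim tendsto_const])
       (use lower marg_le_1[OF stationary_process[OF P]] in auto)
qed

lemma exists_test_sets:
  fixes Q :: "(int \<Rightarrow> 'a::finite) measure"
  assumes Q: "process Q" and \<Omega>: "\<forall>P\<in>\<Omega>. stationary P \<and> rate_exists P Q"
    and beta: "\<forall>P\<in>\<Omega>. \<forall>\<epsilon>. 0 < \<epsilon> \<and> \<epsilon> < 1 \<longrightarrow> beta_bar \<epsilon> P Q \<le> - hrate P Q"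
    and "0 < \<eta>"
  shows "\<exists>M :: nat \<Rightarrow> 'a list set. (\<forall>n. M n \<subseteq> words n) \<and>
    (\<forall>P\<in>\<Omega>. (\<lambda>n. marg P n (M n)) \<longlonglongrightarrow> 1) \<and>
    (if hrate_set \<Omega> Q < \<infinity>
     then limsup (\<lambda>n. ereal (1 / real n) * eln (marg Q n (M n))) \<le> - hrate_set \<Omega> Q + ereal \<eta>
     else limsup (\<lambda>n. ereal (1 / real n) * eln (marg Q n (M n))) \<le> ereal (- 1 / \<eta>))"
proof -
  have "0 \<le> hrate_set \<Omega> Q"
    using \<Omega> by (intro hrate_set_nonneg[OF Q]) (auto simp: stationary_process)
  then obtain h where h: "hrate_set \<Omega> Q < \<infinity> \<Longrightarrow> hrate_set \<Omega> Q = ereal h"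
    by (cases "hrate_set \<Omega> Q") auto
  define c where "c = (if hrate_set \<Omega> Q < \<infinity> then h - \<eta> else 1 / \<eta>)"
  have rate: "ereal (c + \<eta> / 2) < hrate P Q" if "P \<in> \<Omega>" for P
  proof -
    have "hrate_set \<Omega> Q \<le> hrate P Q"
      unfolding hrate_set_def using that by (rule INF_lower)
    moreover have "ereal (c + \<eta> / 2) < hrate_set \<Omega> Q"
      using h \<open>0 < \<eta>\<close> by (auto simp: c_def top_unique[where 'a = ereal, unfolded top_ereal_def])
    ultimately show ?thesis
      by simp
  qed
  have lim: "\<forall>P\<in>\<Omega>. (\<lambda>n. marg P n (test_set Q c n)) \<longlonglongrightarrow> 1"
  proof
    fix P assume "P \<in> \<Omega>"
    then show "(\<lambda>n. marg P n (test_set Q c n)) \<longlonglongrightarrow> 1"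
      using \<Omega> beta \<open>0 < \<eta>\<close> by (intro marg_test_set_tendsto_1[OF _ Q _ _ rate]) auto
  qed
  have sub: "\<forall>n. test_set Q c n \<subseteq> words n"
    unfolding test_set_def by blast
  have bound: "if hrate_set \<Omega> Q < \<infinity>
      then limsup (\<lambda>n. ereal (1 / real n) * eln (marg Q n (test_set Q c n))) \<le> - hrate_set \<Omega> Q + ereal \<eta>
      else limsup (\<lambda>n. ereal (1 / real n) * eln (marg Q n (test_set Q c n))) \<le> ereal (- 1 / \<eta>)"
  proof -
    have "ereal (- c) = (if hrate_set \<Omega> Q < \<infinity> then - hrate_set \<Omega> Q + ereal \<eta> else ereal (- 1 / \<eta>))"
      using h by (cases "hrate_set \<Omega> Q < \<infinity>") (simp_all add: c_def)
    then show ?thesis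
      using limsup_log_marg_test_set_le[OF Q, of c] by (cases "hrate_set \<Omega> Q < \<infinity>") simp_all
  qed
  show ?thesis
    by (intro exI[of _ "test_set Q c"] conjI sub lim bound)
qed

theorem mainTheorem2:
  fixes Q :: "(int \<Rightarrow> 'a::finite) measure"
    and \<Theta> :: "(int \<Rightarrow> 'a) measure set"
  assumes "process Q"
    and "\<forall>P\<in>\<Theta>. ergodic_process P"
    and "\<forall>P\<in>\<Theta>. rate_exists P Q"
  shows "(\<forall>P\<in>\<Theta>. \<forall>\<epsilon>. 0 < \<epsilon> \<and> \<epsilon> < 1 \<longrightarrow> beta_bar \<epsilon> P Q \<le> - hrate P Q)
    \<longleftrightarrow>
    (\<forall>\<Omega>. \<Omega> \<subseteq> \<Theta> \<longrightarrow>
      (\<forall>\<eta>::real. \<eta> > 0 \<longrightarrow>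
         (\<exists>M :: nat \<Rightarrow> 'a list set. (\<forall>n. M n \<subseteq> words n) \<and>
            (\<forall>P\<in>\<Omega>. (\<lambda>n. marg P n (M n)) \<longlonglongrightarrow> 1) \<and>
            (if hrate_set \<Omega> Q < \<infinity>
             then limsup (\<lambda>n. ereal (1 / real n) * eln (marg Q n (M n)))
                    \<le> - hrate_set \<Omega> Q + ereal \<eta>
             else limsup (\<lambda>n. ereal (1 / real n) * eln (marg Q n (M n)))
                    \<le> ereal (- 1 / \<eta>)))) \<and>
      (\<forall>M' :: nat \<Rightarrow> 'a list set. (\<forall>n. M' n \<subseteq> words n) \<and>
            (\<forall>P\<in>\<Omega>. (\<lambda>n. marg P n (M' n)) \<longlonglongrightarrow> 1) \<longrightarrow>
         liminf (\<lambda>n. ereal (1 / real n) * eln (marg Q n (M' n))) \<ge> - hrate_set \<Omega> Q))"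
  apply (intro iffI allI impI conjI ballI)
  subgoal for \<Omega> \<eta>
    using assms by (intro exists_test_sets) (auto simp: ergodic_process_stationary)
  subgoal for \<Omega> M
    using assms
    by (intro liminf_log_marg_ge_hrate_set) (auto simp: ergodic_process_stationary stationary_process)
  subgoal premises prems for P \<epsilon>
    using prems(1)[rule_format, of "{P}", unfolded hrate_set_singleton] prems(2,3)
    by (intro beta_bar_le_neg_hrate) auto
  done

end
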